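(* Let $Z=\{Z_t:t\ge 0\}$ be a (continuous) fractional Brownian motion with Hurst parameter $H\in(0,1)$, let $\alpha>0$, and put $a_t:=H\,\mathrm{e}^{\alpha t/H}/\alpha$ for $t\in\mathbf{R}$. Define $X^{(D,\alpha)}_t:=\mathrm{e}^{-\alpha t}Z_{a_t}$, $t\in\mathbf{R}$. Then the stationary process $\{X^{(D,\alpha)}_t:t\in\mathbf{R}\}$ is short range dependent for every $H\in(0,1)$, i.e. with $\rho(n):=\mathbf{E}(X^{(D,\alpha)}_iX^{(D,\alpha)}_{i+n})$ (independent of $i$) the limit $\lim_{k\to\infty}\sum_{n=0}^k\rho(n)$ exists.
   Context: A fractional Brownian motion (FBM) with Hurst parameter $H\in(0,1)$ is a centered Gaussian process $Z=\{Z_t:t\ge0\}$ with covariance $\mathbf{E}(Z_tZ_s)=\frac12(t^{2H}+s^{2H}-|t-s|^{2H})$; a continuous version is taken. A stationary second order mean-zero sequence $X=\{X_n\}$ with $\rho_X(n)=\mathbf{E}(X_iX_{i+n})$ is called short range dependent if $\lim_{k\to\infty}\sum_{n=0}^k\rho_X(n)$ exists. *)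

theory Defs
  imports "HOL-Probability.Probability"
begin

definition gaussian_rv :: "'a measure \<Rightarrow> ('a \<Rightarrow> real) \<Rightarrow> bool" where
  "gaussian_rv M X \<longleftrightarrow> X \<in> borel_measurable M \<and>
     (\<exists>\<mu> \<sigma>. (\<sigma> > 0 \<and> distributed M lborel X (normal_density \<mu> \<sigma>))
            \<or> distr M borel X = return borel \<mu>)"

text \<open>Fractional Brownian motion with Hurst parameter H, indexed by t \<ge> 0
  (values of Z at negative times are irrelevant): a centered Gaussian process
  (all finite linear combinations Gaussian) with the fBm covariance and
  continuous sample paths.\<close>
definition is_fbm :: "'a measure \<Rightarrow> real \<Rightarrow> (real \<Rightarrow> 'a \<Rightarrow> real) \<Rightarrow> bool" where
  "is_fbm M H Z \<longleftrightarrow> prob_space M \<and> 0 < H \<and> H < 1 \<and>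
     (\<forall>t\<ge>0. Z t \<in> borel_measurable M) \<and>
     (\<forall>T (c::real \<Rightarrow> real). finite T \<and> T \<subseteq> {0..} \<longrightarrow>
         gaussian_rv M (\<lambda>\<omega>. \<Sum>t\<in>T. c t * Z t \<omega>)) \<and>
     (\<forall>t\<ge>0. integral\<^sup>L M (Z t) = 0) \<and>
     (\<forall>t\<ge>0. \<forall>s\<ge>0. integral\<^sup>L M (\<lambda>\<omega>. Z t \<omega> * Z s \<omega>) =
         (t powr (2*H) + s powr (2*H) - \<bar>t - s\<bar> powr (2*H)) / 2) \<and>
     (\<forall>\<omega>\<in>space M. continuous_on {0..} (\<lambda>t. Z t \<omega>))"

end

theory Submission
  imports Defs
begin

text \<open>Because the time change \<open>a\<close> is exponential, the fBm covariance formula makes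
  \<open>E(X_i X_{i+t})\<close> depend only on the lag: it equals \<open>(H/\<alpha>)^(2H)/2\<close> times
  \<open>exp(-\<alpha>t) + exp(\<alpha>t) - exp(-\<alpha>t) (exp(\<alpha>t/H) - 1)^(2H)\<close>.
  With \<open>u = exp(-\<alpha>t/H)\<close> the last two terms combine to \<open>exp(\<alpha>t) (1 - (1 - u)^(2H))\<close>,
  and \<open>0 \<le> 1 - (1 - u)^(2H) \<le> 2u\<close> since \<open>2H \<le> 2\<close>; so the covariance is dominated by
  \<open>exp(-\<alpha>t) + 2 exp(-\<alpha>(1/H - 1)t)\<close>, which is summable over integer lags as \<open>H < 1\<close>.\<close>

definition lamperti_kernel :: "real \<Rightarrow> real \<Rightarrow> real \<Rightarrow> real" where
  "lamperti_kernel H \<alpha> t =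
     exp (- \<alpha> * t) + exp (\<alpha> * t) - exp (- \<alpha> * t) * (exp (\<alpha> * t / H) - 1) powr (2 * H)"

lemma one_minus_powr_bounds:
  fixes u p :: real
  assumes "0 \<le> u" "u \<le> 1" "0 < p" "p \<le> 2"
  shows "0 \<le> 1 - (1 - u) powr p" "1 - (1 - u) powr p \<le> 2 * u"
proof -
  have "(1 - u) powr p \<le> 1"
  proof (cases "u = 1")
    case False
    then have "(1 - u) powr p \<le> (1 - u) powr 0" using assms by (intro powr_mono') auto
    then show ?thesis using False by simp
  qed simp
  then show "0 \<le> 1 - (1 - u) powr p" by simp
  have "1 - 2 * u \<le> (1 - u) ^ 2" by (simp add: power2_eq_square algebra_simps)
  also have "\<dots> = (1 - u) powr 2" using assms by (simp add: powr_realpow')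
  also have "\<dots> \<le> (1 - u) powr p" using assms by (intro powr_mono') auto
  finally show "1 - (1 - u) powr p \<le> 2 * u" by simp
qed

lemma summable_exp_neg_mult:
  fixes b :: real
  assumes "b > 0"
  shows "summable (\<lambda>n::nat. exp (- b * real n))"
proof -
  have "(\<lambda>n::nat. exp (- b * real n)) = (\<lambda>n. exp (- b) ^ n)"
    by (simp add: exp_of_nat_mult[symmetric] mult.commute)
  moreover have "summable (\<lambda>n. exp (- b) ^ n)"
    using assms by (intro summable_geometric) simp
  ultimately show ?thesis by simp
qed

lemma lamperti_kernel_eq:
  assumes "H > 0" "\<alpha> * t \<ge> 0"
  shows "lamperti_kernel H \<alpha> t
           = exp (- \<alpha> * t) + exp (\<alpha> * t) * (1 - (1 - exp (- \<alpha> * t / H)) powr (2 * H))"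
proof -
  define u where "u = exp (- \<alpha> * t / H)"
  have "u \<le> 1" using assms by (simp add: u_def)
  have "exp (\<alpha> * t / H) - 1 = exp (\<alpha> * t / H) * (1 - u)"
    by (simp add: u_def algebra_simps exp_minus)
  then have "(exp (\<alpha> * t / H) - 1) powr (2 * H) = exp (2 * \<alpha> * t) * (1 - u) powr (2 * H)"
    using \<open>u \<le> 1\<close> assms by (simp add: powr_mult exp_powr_real)
  then show ?thesis
    unfolding lamperti_kernel_def u_def by (simp add: algebra_simps exp_add[symmetric])
qed

lemma abs_lamperti_kernel_le:
  assumes "0 < H" "H \<le> 1" "\<alpha> > 0" "t \<ge> 0"
  shows "\<bar>lamperti_kernel H \<alpha> t\<bar> \<le> exp (- \<alpha> * t) + 2 * exp (- (\<alpha> * (1 / H - 1)) * t)"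
proof -
  define u where "u = exp (- \<alpha> * t / H)"
  have u: "0 \<le> u" "u \<le> 1" using assms by (auto simp: u_def)
  note b = one_minus_powr_bounds[OF u, of "2 * H"]
  have "0 \<le> exp (\<alpha> * t) * (1 - (1 - u) powr (2 * H))" using b assms by simp
  moreover have "exp (\<alpha> * t) * (1 - (1 - u) powr (2 * H)) \<le> exp (\<alpha> * t) * (2 * u)"
    using b assms by (intro mult_left_mono) auto
  moreover have "exp (\<alpha> * t) * (2 * u) = 2 * exp (- (\<alpha> * (1 / H - 1)) * t)"
    unfolding u_def by (simp add: exp_add[symmetric] algebra_simps diff_divide_distrib)
  moreover have "lamperti_kernel H \<alpha> t = exp (- \<alpha> * t) + exp (\<alpha> * t) * (1 - (1 - u) powr (2 * H))"
    using lamperti_kernel_eq[of H \<alpha> t] assms unfolding u_def by simp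
  moreover have "exp (- \<alpha> * t) > 0" by simp
  ultimately show ?thesis by linarith
qed

lemma summable_lamperti_kernel:
  assumes "0 < H" "H < 1" "\<alpha> > 0"
  shows "summable (\<lambda>n::nat. lamperti_kernel H \<alpha> (real n))"
proof (rule summable_comparison_test'[where N = 0])
  show "summable (\<lambda>n::nat. exp (- \<alpha> * n) + 2 * exp (- (\<alpha> * (1 / H - 1)) * n))"
  proof (intro summable_add summable_mult summable_exp_neg_mult)
    show "0 < \<alpha> * (1 / H - 1)" using assms by (simp add: field_simps)
  qed fact
  show "norm (lamperti_kernel H \<alpha> (real n))
          \<le> exp (- \<alpha> * n) + 2 * exp (- (\<alpha> * (1 / H - 1)) * n)" for n
    using abs_lamperti_kernel_le[of H \<alpha> "real n"] assms by simp
qed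

lemma fbm_time_change_covariance:
  fixes c :: real
  assumes "c > 0" "0 < H" "\<alpha> > 0" "t \<ge> 0"
    and a_def: "\<And>s. a s = c * exp (\<alpha> * s / H)"
  shows "exp (- \<alpha> * i) * exp (- \<alpha> * (i + t))
           * ((a i powr (2 * H) + a (i + t) powr (2 * H) - \<bar>a i - a (i + t)\<bar> powr (2 * H)) / 2)
         = c powr (2 * H) / 2 * lamperti_kernel H \<alpha> t"
proof -
  have a_powr: "a s powr (2 * H) = c powr (2 * H) * exp (2 * \<alpha> * s)" for s
    using assms by (simp add: a_def powr_mult exp_powr_real)
  have increment: "a (i + t) - a i = c * exp (\<alpha> * i / H) * (exp (\<alpha> * t / H) - 1)"
    unfolding a_def by (simp add: algebra_simps add_divide_distrib exp_add)
  have "0 \<le> c * exp (\<alpha> * i / H) * (exp (\<alpha> * t / H) - 1)"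
    using assms by simp
  then have "\<bar>a i - a (i + t)\<bar> = c * exp (\<alpha> * i / H) * (exp (\<alpha> * t / H) - 1)"
    by (subst abs_minus_commute) (simp only: increment abs_of_nonneg)
  then have diff_powr: "\<bar>a i - a (i + t)\<bar> powr (2 * H)
      = c powr (2 * H) * exp (2 * \<alpha> * i) * (exp (\<alpha> * t / H) - 1) powr (2 * H)"
    using assms by (simp add: powr_mult exp_powr_real)
  define K where "K = exp (- \<alpha> * i) * exp (- \<alpha> * (i + t))"
  define D where "D = (exp (\<alpha> * t / H) - 1) powr (2 * H)"
  have e1: "K * exp (2 * \<alpha> * i) = exp (- \<alpha> * t)"
    unfolding K_def by (simp add: exp_add[symmetric] algebra_simps)
  have e2: "K * exp (2 * \<alpha> * (i + t)) = exp (\<alpha> * t)"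
    unfolding K_def by (simp add: exp_add[symmetric] algebra_simps)
  have "K * ((c powr (2 * H) * exp (2 * \<alpha> * i) + c powr (2 * H) * exp (2 * \<alpha> * (i + t))
              - c powr (2 * H) * exp (2 * \<alpha> * i) * D) / 2)
      = c powr (2 * H) / 2 * (K * exp (2 * \<alpha> * i) + K * exp (2 * \<alpha> * (i + t))
              - K * exp (2 * \<alpha> * i) * D)"
    by (simp add: field_simps)
  then show ?thesis
    unfolding a_powr diff_powr e1 e2 lamperti_kernel_def K_def[symmetric] D_def[symmetric] .
qed

lemma lamperti_covariance:
  fixes M :: "'a measure" and Z :: "real \<Rightarrow> 'a \<Rightarrow> real"
  assumes fbm: "is_fbm M H Z"
    and alpha: "\<alpha> > 0" and "t \<ge> 0"
    and a_def: "\<And>t. a t = H * exp (\<alpha> * t / H) / \<alpha>"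
    and X_def: "\<And>t \<omega>. X t \<omega> = exp (- \<alpha> * t) * Z (a t) \<omega>"
  shows "integral\<^sup>L M (\<lambda>\<omega>. X i \<omega> * X (i + t) \<omega>)
           = (H / \<alpha>) powr (2 * H) / 2 * lamperti_kernel H \<alpha> t"
proof -
  have H: "0 < H" using fbm unfolding is_fbm_def by simp
  have a_exp: "a s = H / \<alpha> * exp (\<alpha> * s / H)" for s using a_def by simp
  have a_nonneg: "a s \<ge> 0" for s using H alpha by (simp add: a_exp)
  have "(\<lambda>\<omega>. X i \<omega> * X (i + t) \<omega>)
          = (\<lambda>\<omega>. exp (- \<alpha> * i) * exp (- \<alpha> * (i + t)) * (Z (a i) \<omega> * Z (a (i + t)) \<omega>))"
    unfolding X_def by (simp add: fun_eq_iff ac_simps)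
  then have "integral\<^sup>L M (\<lambda>\<omega>. X i \<omega> * X (i + t) \<omega>)
      = exp (- \<alpha> * i) * exp (- \<alpha> * (i + t)) * integral\<^sup>L M (\<lambda>\<omega>. Z (a i) \<omega> * Z (a (i + t)) \<omega>)"
    by (simp only: integral_mult_right_zero)
  also have "\<dots> = exp (- \<alpha> * i) * exp (- \<alpha> * (i + t))
      * ((a i powr (2 * H) + a (i + t) powr (2 * H) - \<bar>a i - a (i + t)\<bar> powr (2 * H)) / 2)"
    using fbm a_nonneg unfolding is_fbm_def by simp
  also have "\<dots> = (H / \<alpha>) powr (2 * H) / 2 * lamperti_kernel H \<alpha> t"
    using H alpha \<open>t \<ge> 0\<close> by (intro fbm_time_change_covariance a_exp) auto
  finally show ?thesis .
qed

theorem proposition3p1: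
  fixes M :: "'a measure" and H \<alpha> :: real and Z :: "real \<Rightarrow> 'a \<Rightarrow> real"
    and a :: "real \<Rightarrow> real" and X :: "real \<Rightarrow> 'a \<Rightarrow> real"
  assumes fbm: "is_fbm M H Z"
    and alpha: "\<alpha> > 0"
    and a_def: "\<And>t. a t = H * exp (\<alpha> * t / H) / \<alpha>"
    and X_def: "\<And>t \<omega>. X t \<omega> = exp (- \<alpha> * t) * Z (a t) \<omega>"
  shows "(\<forall>(i::real) (n::nat). integral\<^sup>L M (\<lambda>\<omega>. X i \<omega> * X (i + real n) \<omega>)
                             = integral\<^sup>L M (\<lambda>\<omega>. X 0 \<omega> * X (real n) \<omega>))
         \<and> convergent (\<lambda>k. \<Sum>n\<le>k. integral\<^sup>L M (\<lambda>\<omega>. X 0 \<omega> * X (real n) \<omega>))"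
proof -
  have H: "0 < H" "H < 1" using fbm unfolding is_fbm_def by auto
  note cov = lamperti_covariance[OF fbm alpha _ a_def X_def]
  have rho: "integral\<^sup>L M (\<lambda>\<omega>. X 0 \<omega> * X (real n) \<omega>)
               = (H / \<alpha>) powr (2 * H) / 2 * lamperti_kernel H \<alpha> (real n)" for n :: nat
    using cov[of "real n" 0] by simp
  have "summable (\<lambda>n::nat. (H / \<alpha>) powr (2 * H) / 2 * lamperti_kernel H \<alpha> (real n))"
    using summable_lamperti_kernel[OF H alpha] by (rule summable_mult)
  then have "convergent (\<lambda>k. \<Sum>n\<le>k. integral\<^sup>L M (\<lambda>\<omega>. X 0 \<omega> * X (real n) \<omega>))"
    unfolding rho using summable_LIMSEQ' convergent_def by blast
  moreover have "integral\<^sup>L M (\<lambda>\<omega>. X i \<omega> * X (i + real n) \<omega>)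
                   = integral\<^sup>L M (\<lambda>\<omega>. X 0 \<omega> * X (real n) \<omega>)" for i :: real and n :: nat
    using cov[of "real n" i] unfolding rho by simp
  ultimately show ?thesis by blast
qed

end
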